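(* Let $n\ge 1$ be an integer. For real numbers $a_1,\dots,a_n$ with $\sum_{j=1}^n a_j=1$ put $$C(t)=\sum_{j=1}^n a_j\cos jt,\qquad S(t)=\sum_{j=1}^n a_j\sin jt .$$ Let $$I=\sup_{a_1,\dots,a_n}\ \min_{t\in\mathbb R}\{C(t):\ S(t)=0\},$$ where the supremum is over all real $a_1,\dots,a_n$ with $\sum_{j=1}^n a_j=1$. Then $$I=-\tan^2\frac{\pi}{2(n+1)}.$$
   Context: $C$ and $S$ are called a pair of conjugate trigonometric polynomials. The set $\{t: S(t)=0\}$ is nonempty (it contains $0$ and $\pi$), so the inner minimum is taken over a nonempty closed set. *)

theory Defs
  imports "HOL-Analysis.Analysis"
begin

definition Cpoly :: "nat \<Rightarrow> (nat \<Rightarrow> real) \<Rightarrow> real \<Rightarrow> real" where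
  "Cpoly n a t = (\<Sum>j=1..n. a j * cos (real j * t))"

definition Spoly :: "nat \<Rightarrow> (nat \<Rightarrow> real) \<Rightarrow> real \<Rightarrow> real" where
  "Spoly n a t = (\<Sum>j=1..n. a j * sin (real j * t))"

text \<open>min over t with S(t) = 0 of C(t) (the minimum is attained; Inf equals it).\<close>
definition min_C_on_zeros :: "nat \<Rightarrow> (nat \<Rightarrow> real) \<Rightarrow> real" where
  "min_C_on_zeros n a = Inf {Cpoly n a t | t. Spoly n a t = 0}"

end

theory Submission
  imports Defs "HOL-Computational_Algebra.Polynomial"
begin

text \<open>Write N = n + 1, \<alpha> = \<pi>/(2N) and \<lambda> = tan^2 \<alpha>.

  Upper bound: suppose C > -\<lambda> at every zero of S. Then z(u) = C(2u) + \<lambda> + i S(2u) avoids the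
  non-positive real axis, so Arg z is continuous on [0, \<pi>/2], and the polynomial W of degree N with
  W(cos u) = Re (e^{-iNu} z(u)) = |z(u)| cos (Arg z(u) - Nu) vanishes wherever Arg z(u) - Nu crosses
  \<pi>/2 - m\<pi>. The intermediate value theorem yields \<lfloor>N/2\<rfloor> such points u_m in (0, \<pi>/2),
  interlacing with the zeros (2m+1)\<alpha> of cos (Nu). As W has the parity of N, factoring it over these
  roots gives 1 + \<lambda> = W(1) = \<lambda> 2^{N-1} \<Prod> sin^2 u_m, and comparing with the Chebyshev product
  2^{N-1} \<Prod> sin^2 ((2k+1)\<alpha>) = 1 gives the contradiction 1 + \<lambda> < \<lambda> / sin^2 \<alpha> = 1 + \<lambda>.

  Lower bound: for the Fejer-type coefficients b_j = (N - j) sin (j\<pi>/N) one has sin t \<cdot> S(t) \<ge> 0 and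
  C(\<pi>) = -\<lambda> \<Sum> b_j. Normalising and adding \<epsilon> sin t makes the zeros of S exactly the multiples
  of \<pi>, where C takes the values 1 and -(1 - \<epsilon>)\<lambda> - \<epsilon>.\<close>

section \<open>Chebyshev polynomials\<close>

fun cheb :: "nat \<Rightarrow> real poly" where
  "cheb 0 = 1"
| "cheb (Suc 0) = [:0, 1:]"
| "cheb (Suc (Suc k)) = [:0, 2:] * cheb (Suc k) - cheb k"

lemma cos_Suc_Suc_mult:
  "cos (real (Suc (Suc k)) * u) = 2 * cos u * cos (real (Suc k) * u) - cos (real k * u)"
  using cos_add[of "real (Suc k) * u" u] cos_diff[of "real (Suc k) * u" u]
  by (simp add: algebra_simps)

lemma sin_Suc_Suc_mult:
  "sin (real (Suc (Suc k)) * u) = 2 * cos u * sin (real (Suc k) * u) - sin (real k * u)"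
  using sin_add[of "real (Suc k) * u" u] sin_diff[of "real (Suc k) * u" u]
  by (simp add: algebra_simps)

lemma poly_cheb_cos: "poly (cheb k) (cos u) = cos (real k * u)"
proof (induction k rule: cheb.induct)
  case (3 k)
  then show ?case using cos_Suc_Suc_mult[of k u] by (simp add: algebra_simps)
qed simp_all

lemma poly_cheb_one [simp]: "poly (cheb k) 1 = 1"
  using poly_cheb_cos[of k 0] by simp

lemma poly_cheb_minus: "poly (cheb k) (- x) = (-1) ^ k * poly (cheb k) x"
  by (induction k rule: cheb.induct) (simp_all add: algebra_simps)

lemma degree_coeff_cheb: "degree (cheb k) \<le> k \<and> coeff (cheb k) k = (if k = 0 then 1 else 2 ^ (k - 1))"
proof (induction k rule: cheb.induct)
  case (3 k)
  have "degree ([:0, 2:] * cheb (Suc k)) \<le> Suc (Suc k)"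
    using 3 degree_mult_le[of "[:0, 2:]" "cheb (Suc k)"] by simp
  moreover have "coeff (cheb k) (Suc (Suc k)) = 0"
    using 3 by (simp add: coeff_eq_0)
  ultimately show ?case
    using 3 by (auto simp: degree_diff_le mult_pCons_left)
qed simp_all

lemma degree_cheb [simp]: "degree (cheb k) = k"
  using degree_coeff_cheb[of k] le_degree[of "cheb k" k] by (simp split: if_splits)

lemma coeff_cheb_degree: "coeff (cheb k) k = (if k = 0 then 1 else 2 ^ (k - 1))"
  using degree_coeff_cheb[of k] by simp

lemma Cpoly_eq_if_cos_eq:
  assumes "cos s = cos t"
  shows "Cpoly n a s = Cpoly n a t"
  unfolding Cpoly_def by (metis assms poly_cheb_cos)

lemma sin_mult_sin_eq_if_cos_eq:
  assumes "cos s = cos t"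
  shows "sin s * sin (real j * s) = sin t * sin (real j * t)"
proof -
  have "sin x * sin (real j * x) = cos x * poly (cheb j) (cos x) - poly (cheb (Suc j)) (cos x)" for x
    using cos_add[of "real j * x" x] by (simp add: poly_cheb_cos algebra_simps)
  then show ?thesis using assms by metis
qed

section \<open>Polynomials with symmetric roots\<close>

lemma poly_eq_lead_coeff_prod_roots:
  fixes p :: "'a::idom poly"
  assumes "finite R" "card R = degree p" "\<forall>r\<in>R. poly p r = 0"
  shows "poly p x = lead_coeff p * (\<Prod>r\<in>R. x - r)"
  using assms
proof (induction R arbitrary: p rule: finite_induct)
  case empty
  then obtain c where "p = [:c:]" by (metis degree_0_id card.empty)
  then show ?case by simp
next
  case (insert r R)
  obtain q where pq: "p = [:-r, 1:] * q"
    using insert.prems(2) poly_eq_0_iff_dvd by (metis dvdE insertI1)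
  have "q \<noteq> 0" using pq insert by auto
  then have "degree p = Suc (degree q)" unfolding pq by (subst degree_mult_eq) auto
  moreover have "\<forall>s\<in>R. poly q s = 0" using insert pq by auto
  ultimately have "poly q x = lead_coeff q * (\<Prod>s\<in>R. x - s)"
    using insert by simp
  moreover have "lead_coeff p = lead_coeff q" unfolding pq lead_coeff_mult by simp
  ultimately show ?case using insert.hyps unfolding pq by (simp add: algebra_simps)
qed

lemma poly_one_eq_prod_symmetric_roots:
  fixes p :: "'a::linordered_idom poly" and v :: "'b \<Rightarrow> 'a"
  assumes fin: "finite I" and inj: "inj_on v I" and pos: "\<forall>i\<in>I. v i > 0"
    and card: "card I = degree p div 2"
    and parity: "\<forall>x. poly p (- x) = (-1) ^ degree p * poly p x"
    and roots: "\<forall>i\<in>I. poly p (v i) = 0"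
  shows "poly p 1 = lead_coeff p * (\<Prod>i\<in>I. 1 - (v i)\<^sup>2)"
proof -
  define A where "A = v ` I \<union> uminus ` v ` I"
  define Z where "Z = (if odd (degree p) then {0} else {} :: 'a set)"
  have inj_neg: "inj_on (\<lambda>i. - v i) I" using inj by (auto simp: inj_on_def)
  have disj: "v ` I \<inter> uminus ` v ` I = {}"
    using pos by (auto simp: image_iff) (metis neg_0_less_iff_less not_less_iff_gr_or_eq)
  have disjZ: "A \<inter> Z = {}" using pos by (auto simp: A_def Z_def)
  have "card (A \<union> Z) = degree p"
  proof -
    have "card A = card I + card I"
      unfolding A_def using fin disj inj inj_neg
      by (simp add: card_Un_disjoint card_image image_image)
    moreover have "degree p = 2 * (degree p div 2) + card Z"
      by (cases "even (degree p)") (auto simp: Z_def elim!: evenE oddE)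
    ultimately show ?thesis using fin disjZ card by (simp add: A_def Z_def card_Un_disjoint)
  qed
  moreover have "\<forall>r\<in>A \<union> Z. poly p r = 0"
    using roots parity parity[rule_format, of 0] by (auto simp: A_def Z_def split: if_splits)
  ultimately have "poly p 1 = lead_coeff p * (\<Prod>r\<in>A \<union> Z. 1 - r)"
    using fin by (intro poly_eq_lead_coeff_prod_roots) (auto simp: A_def Z_def)
  also have "(\<Prod>r\<in>A \<union> Z. 1 - r) = (\<Prod>i\<in>I. 1 - v i) * (\<Prod>i\<in>I. 1 + v i)"
    using fin disj disjZ inj inj_neg
    by (simp add: A_def Z_def prod.union_disjoint prod.reindex image_image)
  also have "\<dots> = (\<Prod>i\<in>I. 1 - (v i)\<^sup>2)"
    by (simp add: prod.distrib[symmetric] power2_eq_square algebra_simps)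
  finally show ?thesis .
qed

text \<open>The positive roots of the Chebyshev polynomial are the numbers cos ((2k+1)\<pi>/(2N)).\<close>
lemma prod_sin_sq_cheb_roots:
  assumes "N \<ge> 1"
  shows "2 ^ (N - 1) * (\<Prod>k<N div 2. (sin ((2 * real k + 1) * pi / (2 * real N)))\<^sup>2) = 1"
proof -
  define \<theta> where "\<theta> k = (2 * real k + 1) * pi / (2 * real N)" for k
  have \<theta>: "0 < \<theta> k \<and> \<theta> k < pi / 2" if "k < N div 2" for k
  proof -
    have "2 * real k + 1 < real N" using that by linarith
    then have "(2 * real k + 1) * pi < real N * pi" by simp
    moreover have "0 < real N" "0 < (2 * real k + 1) * pi" using assms by simp_all
    ultimately show ?thesis unfolding \<theta>_def by (simp add: field_simps)
  qed
  have "inj_on (\<lambda>k. cos (\<theta> k)) {..<N div 2}"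
  proof (rule inj_onI)
    fix k l assume "k \<in> {..<N div 2}" "l \<in> {..<N div 2}" and eq: "cos (\<theta> k) = cos (\<theta> l)"
    then have "0 < \<theta> k \<and> \<theta> k < pi / 2" "0 < \<theta> l \<and> \<theta> l < pi / 2" using \<theta> by simp_all
    then have "\<theta> k = \<theta> l" using pi_gt_zero by (intro cos_inj_pi[OF _ _ _ _ eq]) linarith+
    then show "k = l" using assms by (simp add: \<theta>_def field_simps)
  qed
  moreover have "poly (cheb N) (cos (\<theta> k)) = 0" for k
  proof -
    have "real N * \<theta> k = real k * pi + pi / 2" using assms by (simp add: \<theta>_def field_simps)
    then show ?thesis by (simp add: poly_cheb_cos cos_add)
  qed
  ultimately have "poly (cheb N) 1 = lead_coeff (cheb N) * (\<Prod>k<N div 2. 1 - (cos (\<theta> k))\<^sup>2)"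
    using \<theta> by (intro poly_one_eq_prod_symmetric_roots) (auto simp: poly_cheb_minus cos_gt_zero)
  then show ?thesis using assms by (simp add: coeff_cheb_degree cos_squared_eq \<theta>_def)
qed

section \<open>The upper bound\<close>

text \<open>Since cos (\<bar>2j - N\<bar> u) = cos (2j u - N u) with N = n + 1, evaluating at cos u gives the real
  part of e^{-iNu} (C(2u) + c + i S(2u)).\<close>
definition W_poly :: "nat \<Rightarrow> (nat \<Rightarrow> real) \<Rightarrow> real \<Rightarrow> real poly" where
  "W_poly n a c = smult c (cheb (Suc n))
     + (\<Sum>j=1..n. smult (a j) (cheb (nat \<bar>2 * int j - int (Suc n)\<bar>)))"

lemma poly_W_poly_cos:
  "poly (W_poly n a c) (cos u)
     = (Cpoly n a (2 * u) + c) * cos (real (Suc n) * u) + Spoly n a (2 * u) * sin (real (Suc n) * u)"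
proof -
  have "a j * cos (real (nat \<bar>2 * int j - int (Suc n)\<bar>) * u)
      = cos (real (Suc n) * u) * (a j * cos (real j * (2 * u)))
        + sin (real (Suc n) * u) * (a j * sin (real j * (2 * u)))" for j
  proof -
    have "real (nat \<bar>2 * int j - int (Suc n)\<bar>) = \<bar>real j * 2 - real (Suc n)\<bar>" by linarith
    moreover have "cos (\<bar>x\<bar> * u) = cos (x * u)" for x :: real by (cases "x \<ge> 0") auto
    ultimately have "cos (real (nat \<bar>2 * int j - int (Suc n)\<bar>) * u) = cos ((real j * 2 - real (Suc n)) * u)"
      by presburger
    then show ?thesis by (simp add: left_diff_distrib cos_diff algebra_simps)
  qed
  then show ?thesis
    by (simp add: W_poly_def poly_sum poly_cheb_cos Cpoly_def Spoly_def sum.distrib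
        sum_distrib_left algebra_simps)
qed

lemma poly_W_poly_minus: "poly (W_poly n a c) (- x) = (-1) ^ Suc n * poly (W_poly n a c) x"
proof -
  have "(-1 :: real) ^ nat \<bar>2 * int j - int (Suc n)\<bar> = (-1) ^ Suc n" for j
  proof -
    have "nat \<bar>2 * int j - int (Suc n)\<bar> + Suc n = (if 2 * j \<ge> Suc n then 2 * j else 2 * (Suc n - j))"
      by auto
    then have "even (nat \<bar>2 * int j - int (Suc n)\<bar>) \<longleftrightarrow> even (Suc n)"
      by (metis even_add even_mult_iff even_numeral)
    then show ?thesis by (simp add: minus_one_power_iff)
  qed
  then show ?thesis
    by (simp add: W_poly_def poly_sum poly_cheb_minus sum_distrib_left algebra_simps)
qed

lemma degree_W_poly:
  assumes "c \<noteq> 0"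
  shows "degree (W_poly n a c) = Suc n" "lead_coeff (W_poly n a c) = c * 2 ^ n"
proof -
  have small: "nat \<bar>2 * int j - int (Suc n)\<bar> < Suc n" if "j \<in> {1..n}" for j
    using that by auto
  have "degree (\<Sum>j=1..n. smult (a j) (cheb (nat \<bar>2 * int j - int (Suc n)\<bar>))) \<le> n"
    by (rule degree_sum_le) (use small in \<open>auto intro: order.trans[OF degree_smult_le]\<close>)
  then have "degree (W_poly n a c) \<le> Suc n"
    unfolding W_poly_def by (intro degree_add_le) auto
  moreover have "coeff (W_poly n a c) (Suc n) = c * 2 ^ n"
    using small by (simp add: W_poly_def coeff_sum coeff_cheb_degree coeff_eq_0)
  ultimately show "degree (W_poly n a c) = Suc n" "lead_coeff (W_poly n a c) = c * 2 ^ n"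
    using assms le_degree[of "W_poly n a c" "Suc n"] by auto
qed

lemma poly_W_poly_one: "poly (W_poly n a c) 1 = (\<Sum>j=1..n. a j) + c"
  using poly_W_poly_cos[of n a c 0] by (simp add: Cpoly_def Spoly_def)

lemma Re_cos_add_Im_sin: "Re z * cos x + Im z * sin x = cmod z * cos (Arg z - x)"
  using Re_rcis[of "cmod z" "Arg z"] Im_rcis[of "cmod z" "Arg z"]
  by (simp add: rcis_cmod_Arg cos_diff algebra_simps)

lemma Arg_diff_linear_crossing:
  fixes g :: "real \<Rightarrow> complex"
  assumes "0 < b" "continuous_on {0..b} g" "\<And>x. x \<in> {0..b} \<Longrightarrow> g x \<notin> \<real>\<^sub>\<le>\<^sub>0" "g 0 \<in> \<real>"
    and "Arg (g b) - c * b < y" "y < 0"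
  obtains x where "0 < x" "x < b" "Arg (g x) - c * x = y"
proof -
  define h where "h x = Arg (g x) - c * x" for x
  have "continuous_on {0..b} h"
    unfolding h_def using assms(2,3) by (intro continuous_intros) auto
  moreover have "Arg (g 0) = 0"
    using assms(1) assms(3)[of 0] assms(4) by (auto simp: Arg_eq_0 complex_nonpos_Reals_iff complex_is_Real_iff)
  then have "h 0 = 0" by (simp add: h_def)
  ultimately obtain x where "0 \<le> x" "x \<le> b" "h x = y"
    using IVT2'[of h b y 0] assms(1,5,6) by (auto simp: h_def)
  moreover have "x \<noteq> 0" "x \<noteq> b" using \<open>h 0 = 0\<close> \<open>h x = y\<close> assms(5,6) by (auto simp: h_def)
  ultimately show ?thesis using that[of x] by (simp add: h_def)
qed

definition W_curve :: "nat \<Rightarrow> (nat \<Rightarrow> real) \<Rightarrow> real \<Rightarrow> real \<Rightarrow> complex" where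
  "W_curve n a c u = Complex (Cpoly n a (2 * u) + c) (Spoly n a (2 * u))"

lemma poly_W_poly_cos_Arg:
  "poly (W_poly n a c) (cos u)
     = cmod (W_curve n a c u) * cos (Arg (W_curve n a c u) - real (Suc n) * u)"
  using Re_cos_add_Im_sin[of "W_curve n a c u" "real (Suc n) * u"]
  by (simp add: poly_W_poly_cos W_curve_def)

lemma W_curve_Arg_crossing:
  fixes a :: "nat \<Rightarrow> real"
  assumes C_above: "\<And>t. Spoly n a t = 0 \<Longrightarrow> - c < Cpoly n a t" and m: "m \<in> {1..Suc n div 2}"
  obtains x where "0 < x" "x < min ((2 * real m + 1) * pi / (2 * real (Suc n))) (pi / 2)"
    "Arg (W_curve n a c x) - real (Suc n) * x = pi / 2 - real m * pi"
proof -
  define N where "N = real (Suc n)"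
  define z where "z = W_curve n a c"
  define b where "b = min ((2 * real m + 1) * pi / (2 * N)) (pi / 2)"
  have z_not_nonpos: "z x \<notin> \<real>\<^sub>\<le>\<^sub>0" for x
    using C_above[of "2 * x"] by (auto simp: z_def W_curve_def complex_nonpos_Reals_iff)
  have z_cont: "continuous_on A z" for A
    unfolding z_def W_curve_def Cpoly_def Spoly_def by (intro continuous_intros)
  have z_real: "z 0 \<in> \<real>" "z (pi / 2) \<in> \<real>"
    by (simp_all add: z_def W_curve_def Spoly_def complex_is_Real_iff)
  \<comment> \<open>At the zero (2m+1)\<pi>/(2N) of cos (Nx), or at \<pi>/2 where z is real, Arg z x - N x has passed \<pi>/2 - m\<pi>.\<close>
  have "Arg (z b) - N * b < pi / 2 - real m * pi"
  proof (cases "2 * m + 1 \<le> Suc n")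
    case True
    then have "(2 * real m + 1) * pi / (2 * N) \<le> pi / 2" by (simp add: N_def field_simps)
    then have "b = (2 * real m + 1) * pi / (2 * N)" by (simp add: b_def)
    moreover have "Arg (z b) \<noteq> pi"
      using z_not_nonpos[of b] by (auto simp: Arg_eq_pi complex_nonpos_Reals_iff)
    then have "Arg (z b) < pi" using Arg_le_pi[of "z b"] by linarith
    ultimately show ?thesis by (simp add: N_def field_simps)
  next
    case False
    then have "pi / 2 \<le> (2 * real m + 1) * pi / (2 * N)" by (simp add: N_def field_simps)
    then have b: "b = pi / 2" by (simp add: b_def)
    have "Arg (z (pi / 2)) = 0"
      using z_real z_not_nonpos[of "pi / 2"]
      by (auto simp: Arg_eq_0 complex_nonpos_Reals_iff complex_is_Real_iff)
    moreover have "2 * real m < N + 1" using m by (simp add: N_def) linarith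
    then have "2 * real m * pi < (N + 1) * pi" by simp
    ultimately show ?thesis unfolding b by (simp add: algebra_simps)
  qed
  moreover have "0 < b" using m by (simp add: b_def N_def)
  moreover have "pi / 2 - real m * pi < 0" using m by simp
  ultimately show ?thesis
    using Arg_diff_linear_crossing[OF _ z_cont z_not_nonpos z_real(1)] that
    unfolding z_def b_def N_def by metis
qed

lemma W_poly_interlacing_roots:
  fixes a :: "nat \<Rightarrow> real"
  assumes C_above: "\<And>t. Spoly n a t = 0 \<Longrightarrow> - c < Cpoly n a t"
  obtains u where
    "\<And>m. m \<in> {1..Suc n div 2} \<Longrightarrow> 0 < u m \<and> u m < pi / 2 \<and> poly (W_poly n a c) (cos (u m)) = 0"
    "inj_on (\<lambda>m. cos (u m)) {1..Suc n div 2}"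
    "\<And>m. m \<in> {1..<Suc n div 2} \<Longrightarrow> u m < (2 * real m + 1) * pi / (2 * real (Suc n))"
proof -
  have "\<exists>x. 0 < x \<and> x < min ((2 * real m + 1) * pi / (2 * real (Suc n))) (pi / 2) \<and>
      Arg (W_curve n a c x) - real (Suc n) * x = pi / 2 - real m * pi"
    if "m \<in> {1..Suc n div 2}" for m
    by (rule W_curve_Arg_crossing[of n a c m]) (use C_above that in auto)
  then obtain u where u: "\<And>m. m \<in> {1..Suc n div 2} \<Longrightarrow>
      0 < u m \<and> u m < min ((2 * real m + 1) * pi / (2 * real (Suc n))) (pi / 2) \<and>
      Arg (W_curve n a c (u m)) - real (Suc n) * u m = pi / 2 - real m * pi"
    by metis
  show ?thesis
  proof
    fix m assume m: "m \<in> {1..Suc n div 2}"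
    have "cos (pi / 2 - real m * pi) = 0" by (simp add: cos_diff)
    then show "0 < u m \<and> u m < pi / 2 \<and> poly (W_poly n a c) (cos (u m)) = 0"
      using u[OF m] by (simp add: poly_W_poly_cos_Arg)
  next
    show "inj_on (\<lambda>m. cos (u m)) {1..Suc n div 2}"
    proof (rule inj_onI)
      fix k l assume k: "k \<in> {1..Suc n div 2}" and l: "l \<in> {1..Suc n div 2}"
        and eq: "cos (u k) = cos (u l)"
      have "0 \<le> u k" "u k \<le> pi" "0 \<le> u l" "u l \<le> pi"
        using u[OF k] u[OF l] pi_gt_zero by linarith+
      then have "u k = u l" by (rule cos_inj_pi[OF _ _ _ _ eq])
      then have "pi / 2 - real k * pi = pi / 2 - real l * pi" using u[OF k] u[OF l] by metis
      then show "k = l" by simp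
    qed
  next
    fix m assume "m \<in> {1..<Suc n div 2}"
    then show "u m < (2 * real m + 1) * pi / (2 * real (Suc n))" using u[of m] by simp
  qed
qed

lemma prod_sin_sq_less_of_interlacing:
  fixes u w :: "nat \<Rightarrow> real"
  assumes "K \<ge> 1" and u: "\<And>m. m \<in> {1..K} \<Longrightarrow> 0 < u m \<and> u m < pi / 2"
    and w: "\<And>m. m \<in> {1..<K} \<Longrightarrow> u m < w m \<and> w m \<le> pi / 2"
  shows "(\<Prod>m\<in>{1..K}. (sin (u m))\<^sup>2) < (\<Prod>m\<in>{1..<K}. (sin (w m))\<^sup>2)"
proof -
  define P where "P = (\<Prod>m\<in>{1..<K}. (sin (u m))\<^sup>2)"
  define Q where "Q = (\<Prod>m\<in>{1..<K}. (sin (w m))\<^sup>2)"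
  have sin_le: "0 \<le> sin (u m) \<and> sin (u m) \<le> sin (w m)" if "m \<in> {1..<K}" for m
    using u[of m] w[OF that] that by (auto intro: sin_ge_zero sin_monotone_2pi_le)
  have "0 < sin (w m)" if "m \<in> {1..<K}" for m
    using u[of m] w[OF that] that by (auto intro: sin_gt_zero)
  then have "0 < Q" unfolding Q_def by (intro prod_pos) (simp add: less_imp_neq[symmetric])
  moreover have "P \<le> Q"
    unfolding P_def Q_def using sin_le by (intro prod_mono) (auto intro: power_mono)
  moreover have "0 \<le> (sin (u K))\<^sup>2" by simp
  moreover have "(sin (u K))\<^sup>2 < 1"
    using u[of K] assms(1) cos_gt_zero[of "u K"] by (simp add: sin_squared_eq)
  ultimately have "(sin (u K))\<^sup>2 * P < Q"
    by (smt (verit) mult_left_mono mult_less_cancel_right2)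
  moreover have "{1..K} = insert K {1..<K}" using assms(1) by auto
  ultimately show ?thesis by (simp add: P_def Q_def)
qed

lemma exists_S_zero_C_le:
  fixes a :: "nat \<Rightarrow> real"
  assumes "n \<ge> 1" "(\<Sum>j=1..n. a j) = 1"
  shows "\<exists>t. Spoly n a t = 0 \<and> Cpoly n a t \<le> - (tan (pi / (2 * (real n + 1))))\<^sup>2"
proof (rule ccontr)
  define \<alpha> where "\<alpha> = pi / (2 * real (Suc n))"
  define c where "c = (tan \<alpha>)\<^sup>2"
  define K where "K = Suc n div 2"
  assume "\<not> ?thesis"
  then have C_above: "- c < Cpoly n a t" if "Spoly n a t = 0" for t
    using that by (auto simp: c_def \<alpha>_def not_le add.commute)
  obtain u where roots: "\<And>m. m \<in> {1..K} \<Longrightarrow> 0 < u m \<and> u m < pi / 2 \<and> poly (W_poly n a c) (cos (u m)) = 0"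
    and inj: "inj_on (\<lambda>m. cos (u m)) {1..K}"
    and interlace: "\<And>m. m \<in> {1..<K} \<Longrightarrow> u m < (2 * real m + 1) * pi / (2 * real (Suc n))"
    using W_poly_interlacing_roots[OF C_above] unfolding K_def by blast
  have K: "1 \<le> K" "2 * K \<le> Suc n" using assms(1) by (auto simp: K_def)
  have \<alpha>: "0 < \<alpha>" "\<alpha> < pi / 2" using assms(1) by (auto simp: \<alpha>_def field_simps)
  then have "0 < c" using tan_gt_zero[of \<alpha>] by (simp add: c_def)
  have "1 + c = poly (W_poly n a c) 1" using assms(2) by (simp add: poly_W_poly_one)
  also have "\<dots> = c * 2 ^ n * (\<Prod>m\<in>{1..K}. 1 - (cos (u m))\<^sup>2)"
    using \<open>0 < c\<close> roots inj degree_W_poly[of c n a] cos_gt_zero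
    by (subst poly_one_eq_prod_symmetric_roots) (auto simp: K_def poly_W_poly_minus)
  also have "\<dots> < c * 2 ^ n * (\<Prod>m\<in>{1..<K}. (sin ((2 * real m + 1) * \<alpha>))\<^sup>2)"
  proof -
    have "(2 * real m + 1) * \<alpha> \<le> pi / 2" if "m \<in> {1..<K}" for m
      using that K by (simp add: \<alpha>_def field_simps)
    then have "(\<Prod>m\<in>{1..K}. (sin (u m))\<^sup>2) < (\<Prod>m\<in>{1..<K}. (sin ((2 * real m + 1) * \<alpha>))\<^sup>2)"
      using roots interlace K(1)
      by (intro prod_sin_sq_less_of_interlacing) (auto simp: \<alpha>_def)
    then show ?thesis using \<open>0 < c\<close> by (simp add: sin_squared_eq)
  qed
  also have "\<dots> = c / (sin \<alpha>)\<^sup>2"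
  proof -
    have "2 ^ n * ((sin \<alpha>)\<^sup>2 * (\<Prod>m\<in>{1..<K}. (sin ((2 * real m + 1) * \<alpha>))\<^sup>2)) = 1"
      using prod_sin_sq_cheb_roots[of "Suc n"] K(1)
      by (simp add: K_def \<alpha>_def lessThan_atLeast0 prod.atLeast_Suc_lessThan)
    moreover have "sin \<alpha> \<noteq> 0" using \<alpha> sin_gt_zero by fastforce
    ultimately show ?thesis by (simp add: field_simps)
  qed
  also have "\<dots> = 1 + c"
  proof -
    have "cos \<alpha> \<noteq> 0" "sin \<alpha> \<noteq> 0" using \<alpha> cos_gt_zero sin_gt_zero by fastforce+
    moreover have "(sin \<alpha>)\<^sup>2 + (cos \<alpha>)\<^sup>2 = 1" by simp
    ultimately show ?thesis
      by (simp add: c_def tan_def power_divide field_simps)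
  qed
  finally show False by simp
qed

section \<open>The lower bound\<close>

lemma Dirichlet_cos_identity:
  "2 * (1 - cos x) * (\<Sum>j=1..N. cos (real j * x)) = cos (real N * x) - cos (real (Suc N) * x) - (1 - cos x)"
proof (induction N)
  case (Suc N)
  then show ?case using cos_Suc_Suc_mult[of N x] by (simp add: algebra_simps)
qed simp

lemma Dirichlet_sin_identity:
  "2 * (1 - cos x) * (\<Sum>j=1..N. sin (real j * x)) = sin x + sin (real N * x) - sin (real (Suc N) * x)"
proof (induction N)
  case (Suc N)
  then show ?case using sin_Suc_Suc_mult[of N x] by (simp add: algebra_simps)
qed simp

lemma Fejer_cos_identity:
  "2 * (1 - cos x) * (\<Sum>j=1..N. (real N - real j) * cos (real j * x))
     = 1 - cos (real N * x) - real N * (1 - cos x)"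
proof (induction N)
  case (Suc N)
  have "(\<Sum>j=1..Suc N. (real (Suc N) - real j) * cos (real j * x))
      = (\<Sum>j=1..N. (real N - real j) * cos (real j * x)) + (\<Sum>j=1..N. cos (real j * x))"
    by (simp add: sum.distrib[symmetric] algebra_simps)
  then show ?case using Suc.IH Dirichlet_cos_identity[of x N] by (simp add: algebra_simps)
qed simp

lemma Fejer_sin_identity:
  "2 * (1 - cos x) * (\<Sum>j=1..N. (real N - real j) * sin (real j * x)) = real N * sin x - sin (real N * x)"
proof (induction N)
  case (Suc N)
  have "(\<Sum>j=1..Suc N. (real (Suc N) - real j) * sin (real j * x))
      = (\<Sum>j=1..N. (real N - real j) * sin (real j * x)) + (\<Sum>j=1..N. sin (real j * x))"
    by (simp add: sum.distrib[symmetric] algebra_simps)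
  then show ?case using Suc.IH Dirichlet_sin_identity[of x N] by (simp add: algebra_simps)
qed simp

lemma Cpoly_affine_delta:
  assumes "n \<ge> 1"
  shows "Cpoly n (\<lambda>j. r * a j + (if j = 1 then d else 0)) t = r * Cpoly n a t + d * cos t"
proof -
  have "(\<Sum>j=1..n. (if j = 1 then d else 0) * cos (real j * t)) = d * cos t"
    using assms by (simp add: if_distrib[of "\<lambda>x. x * _"] sum.delta cong: if_cong)
  then show ?thesis by (simp add: Cpoly_def distrib_right sum.distrib sum_distrib_left mult.assoc)
qed

lemma Spoly_affine_delta:
  assumes "n \<ge> 1"
  shows "Spoly n (\<lambda>j. r * a j + (if j = 1 then d else 0)) t = r * Spoly n a t + d * sin t"
proof -
  have "(\<Sum>j=1..n. (if j = 1 then d else 0) * sin (real j * t)) = d * sin t"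
    using assms by (simp add: if_distrib[of "\<lambda>x. x * _"] sum.delta cong: if_cong)
  then show ?thesis by (simp add: Spoly_def distrib_right sum.distrib sum_distrib_left mult.assoc)
qed

lemma sin_mult_Spoly_eq_if_cos_eq:
  assumes "cos s = cos t"
  shows "sin s * Spoly n a s = sin t * Spoly n a t"
  unfolding Spoly_def sum_distrib_left
  by (intro sum.cong refl) (metis sin_mult_sin_eq_if_cos_eq[OF assms] mult.left_commute)

text \<open>Normalised and perturbed by \<epsilon> sin t, these coefficients come within \<epsilon> of the supremum.\<close>
definition fejer_coeff :: "nat \<Rightarrow> nat \<Rightarrow> real" where
  "fejer_coeff n j = (real (Suc n) - real j) * sin (real j * (pi / real (Suc n)))"

lemma sum_fejer_coeff_extend:
  "(\<Sum>j=1..n. f j * fejer_coeff n j) = (\<Sum>j=1..Suc n. f j * fejer_coeff n j)"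
  by (simp add: fejer_coeff_def)

lemma sum_fejer_coeff_identity:
  "2 * (1 - cos (pi / real (Suc n))) * (\<Sum>j=1..n. fejer_coeff n j) = real (Suc n) * sin (pi / real (Suc n))"
  using sum_fejer_coeff_extend[of "\<lambda>_. 1" n] Fejer_sin_identity[of "pi / real (Suc n)" "Suc n"]
  by (simp add: fejer_coeff_def)

lemma Cpoly_fejer_coeff_pi_identity:
  "2 * (1 + cos (pi / real (Suc n))) * Cpoly n (fejer_coeff n) pi
     = - real (Suc n) * sin (pi / real (Suc n))"
proof -
  define \<theta> where "\<theta> = pi / real (Suc n)"
  have "fejer_coeff n j * cos (real j * pi) = (real (Suc n) - real j) * sin (real j * (\<theta> + pi))" for j
    by (simp add: fejer_coeff_def \<theta>_def distrib_left sin_add)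
  moreover have "sin (real (Suc n) * (\<theta> + pi)) = 0"
  proof -
    have "real (Suc n) * (\<theta> + pi) = real (Suc (Suc n)) * pi" by (simp add: \<theta>_def field_simps)
    then show ?thesis by (simp only: sin_npi)
  qed
  ultimately show ?thesis
    using sum_fejer_coeff_extend[of "\<lambda>j. cos (real j * pi)" n] Fejer_sin_identity[of "\<theta> + pi" "Suc n"]
    by (simp add: Cpoly_def mult.commute \<theta>_def) (simp add: algebra_simps)
qed

text \<open>2 S(t) is the difference of the Fejer sums at t - \<theta> and t + \<theta>, and (n + 1) \<theta> = \<pi>.\<close>
lemma Spoly_fejer_coeff_identity:
  fixes n :: nat
  defines "\<theta> \<equiv> pi / real (Suc n)"
  shows "4 * (1 - cos (t - \<theta>)) * (1 - cos (t + \<theta>)) * Spoly n (fejer_coeff n) t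
           = 2 * sin t * sin \<theta> * (1 + cos (real (Suc n) * t))"
proof -
  define F where "F x = (\<Sum>j=1..Suc n. (real (Suc n) - real j) * cos (real j * x))" for x
  define A where "A = 1 - cos (t - \<theta>)"
  define B where "B = 1 - cos (t + \<theta>)"
  have "F (t - \<theta>) - F (t + \<theta>) = (\<Sum>j=1..Suc n. 2 * sin (real j * t) * fejer_coeff n j)"
    unfolding F_def sum_subtractf[symmetric]
    by (intro sum.cong refl) (simp add: fejer_coeff_def \<theta>_def right_diff_distrib distrib_left
        cos_add cos_diff algebra_simps)
  also have "\<dots> = 2 * Spoly n (fejer_coeff n) t"
    using sum_fejer_coeff_extend[of "\<lambda>j. 2 * sin (real j * t)" n]
    by (simp add: Spoly_def sum_distrib_left algebra_simps)
  finally have F_diff: "F (t - \<theta>) - F (t + \<theta>) = 2 * Spoly n (fejer_coeff n) t" .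
  have "cos (real (Suc n) * (t - \<theta>)) = - cos (real (Suc n) * t)"
    "cos (real (Suc n) * (t + \<theta>)) = - cos (real (Suc n) * t)"
    by (simp_all add: \<theta>_def right_diff_distrib distrib_left cos_diff cos_add)
  then have FA: "2 * A * F (t - \<theta>) = 1 + cos (real (Suc n) * t) - real (Suc n) * A"
    and FB: "2 * B * F (t + \<theta>) = 1 + cos (real (Suc n) * t) - real (Suc n) * B"
    using Fejer_cos_identity[of "t - \<theta>" "Suc n"] Fejer_cos_identity[of "t + \<theta>" "Suc n"]
    by (simp_all only: A_def B_def F_def)
  have "4 * A * B * Spoly n (fejer_coeff n) t = 2 * A * B * (F (t - \<theta>) - F (t + \<theta>))"
    by (simp add: F_diff)
  also have "\<dots> = B * (2 * A * F (t - \<theta>)) - A * (2 * B * F (t + \<theta>))"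
    by (simp add: algebra_simps)
  also have "\<dots> = (B - A) * (1 + cos (real (Suc n) * t))"
    unfolding FA FB by (simp add: algebra_simps)
  finally have "4 * A * B * Spoly n (fejer_coeff n) t = (B - A) * (1 + cos (real (Suc n) * t))" .
  moreover have "B - A = 2 * sin t * sin \<theta>" by (simp add: A_def B_def cos_add cos_diff)
  ultimately show ?thesis by (simp add: A_def B_def)
qed

lemma cos_eq_if_cos_diff_eq_one:
  fixes s t :: real
  assumes "cos (s - t) = 1"
  shows "cos s = cos t"
proof -
  have "sin (s - t) = 0" using assms sin_squared_eq[of "s - t"] by simp
  then show ?thesis using assms cos_add[of "s - t" t] by simp
qed

lemma sin_mult_Spoly_fejer_coeff_nonneg: "0 \<le> sin t * Spoly n (fejer_coeff n) t"
proof -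
  define \<theta> where "\<theta> = pi / real (Suc n)"
  have "0 < \<theta>" "\<theta> \<le> pi" by (auto simp: \<theta>_def field_simps)
  then have "0 \<le> sin \<theta>" by (simp add: sin_ge_zero)
  show ?thesis
  proof (cases "cos (t - \<theta>) = 1 \<or> cos (t + \<theta>) = 1")
    case True
    then have "cos t = cos \<theta>"
      using cos_eq_if_cos_diff_eq_one[of t \<theta>] cos_eq_if_cos_diff_eq_one[of t "- \<theta>"] by auto
    then have "sin t * Spoly n (fejer_coeff n) t = sin \<theta> * Spoly n (fejer_coeff n) \<theta>"
      by (rule sin_mult_Spoly_eq_if_cos_eq)
    also have "\<dots> = (\<Sum>j=1..n. sin \<theta> * ((real (Suc n) - real j) * (sin (real j * \<theta>))\<^sup>2))"
      by (simp add: Spoly_def fejer_coeff_def \<theta>_def sum_distrib_left power2_eq_square algebra_simps)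
    also have "0 \<le> \<dots>" using \<open>0 \<le> sin \<theta>\<close> by (intro sum_nonneg) auto
    finally show ?thesis by simp
  next
    case False
    then have "0 < 4 * (1 - cos (t - \<theta>)) * (1 - cos (t + \<theta>))"
      using cos_le_one[of "t - \<theta>"] cos_le_one[of "t + \<theta>"] by (simp add: order_less_le)
    moreover have "0 \<le> 4 * (1 - cos (t - \<theta>)) * (1 - cos (t + \<theta>)) * (sin t * Spoly n (fejer_coeff n) t)"
    proof -
      have "0 \<le> 1 + cos (real (Suc n) * t)"
        using cos_ge_minus_one[of "real (Suc n) * t"] by linarith
      then have "0 \<le> sin t * (2 * sin t * sin \<theta> * (1 + cos (real (Suc n) * t)))"
        using \<open>0 \<le> sin \<theta>\<close> by (simp add: mult.assoc[symmetric])
      also have "\<dots> = sin t * (4 * (1 - cos (t - \<theta>)) * (1 - cos (t + \<theta>)) * Spoly n (fejer_coeff n) t)"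
        by (simp only: \<theta>_def Spoly_fejer_coeff_identity)
      finally show ?thesis by (simp only: ac_simps)
    qed
    ultimately show ?thesis by (simp add: zero_le_mult_iff)
  qed
qed

lemma sum_fejer_coeff_pos:
  assumes "n \<ge> 1"
  shows "0 < (\<Sum>j=1..n. fejer_coeff n j)"
proof (rule sum_pos)
  fix j assume j: "j \<in> {1..n}"
  then have "real j * pi < real (Suc n) * pi" by (intro mult_strict_right_mono) auto
  then have "real j * (pi / real (Suc n)) < pi" by (simp add: field_simps)
  then show "0 < fejer_coeff n j"
    using j by (simp add: fejer_coeff_def sin_gt_zero)
qed (use assms in auto)

lemma tan_half_sq_mult:
  fixes x :: real
  assumes "1 + cos x \<noteq> 0"
  shows "(tan (x / 2))\<^sup>2 * (1 + cos x) = 1 - cos x"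
proof -
  have "(tan (x / 2))\<^sup>2 = (sin x)\<^sup>2 / (1 + cos x)\<^sup>2"
    using tan_half[of "x / 2"] by (simp add: power_divide add.commute)
  moreover have "(sin x)\<^sup>2 = (1 - cos x) * (1 + cos x)"
    by (simp add: sin_squared_eq power2_eq_square algebra_simps)
  ultimately show ?thesis using assms by (simp add: power2_eq_square)
qed

lemma Cpoly_fejer_coeff_pi:
  assumes "n \<ge> 1"
  shows "Cpoly n (fejer_coeff n) pi = - (tan (pi / (2 * (real n + 1))))\<^sup>2 * (\<Sum>j=1..n. fejer_coeff n j)"
proof -
  define \<theta> where "\<theta> = pi / real (Suc n)"
  have "0 < \<theta>" "\<theta> < pi" using assms by (auto simp: \<theta>_def field_simps)
  then have "1 + cos \<theta> \<noteq> 0" using cos_monotone_0_pi[of \<theta> pi] by auto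
  define c where "c = (tan (pi / (2 * (real n + 1))))\<^sup>2"
  have "\<theta> / 2 = pi / (2 * (real n + 1))" by (simp add: \<theta>_def)
  then have "c * (1 + cos \<theta>) = 1 - cos \<theta>"
    using tan_half_sq_mult[OF \<open>1 + cos \<theta> \<noteq> 0\<close>] by (simp only: c_def)
  have "2 * (1 + cos \<theta>) * Cpoly n (fejer_coeff n) pi = - (2 * (1 - cos \<theta>) * (\<Sum>j=1..n. fejer_coeff n j))"
    using Cpoly_fejer_coeff_pi_identity[of n] sum_fejer_coeff_identity[of n] by (simp add: \<theta>_def algebra_simps)
  also have "\<dots> = 2 * (1 + cos \<theta>) * (- c * (\<Sum>j=1..n. fejer_coeff n j))"
    unfolding \<open>c * (1 + cos \<theta>) = 1 - cos \<theta>\<close>[symmetric] by (simp add: algebra_simps)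
  finally have "Cpoly n (fejer_coeff n) pi = - c * (\<Sum>j=1..n. fejer_coeff n j)"
    using \<open>1 + cos \<theta> \<noteq> 0\<close> by (subst (asm) mult_left_cancel) simp_all
  then show ?thesis by (simp add: c_def)
qed

lemma min_C_on_zeros_le:
  assumes "Spoly n a t = 0"
  shows "min_C_on_zeros n a \<le> Cpoly n a t"
  unfolding min_C_on_zeros_def
proof (rule cInf_lower)
  show "Cpoly n a t \<in> {Cpoly n a t |t. Spoly n a t = 0}" using assms by blast
  have "- \<bar>a j\<bar> \<le> a j * cos (real j * s)" for j s
  proof -
    have "\<bar>a j * cos (real j * s)\<bar> \<le> \<bar>a j\<bar>" by (simp add: abs_mult mult_left_le)
    then show ?thesis by linarith
  qed
  then have "- (\<Sum>j=1..n. \<bar>a j\<bar>) \<le> Cpoly n a s" for s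
    unfolding Cpoly_def sum_negf[symmetric] by (intro sum_mono)
  then show "bdd_below {Cpoly n a t |t. Spoly n a t = 0}"
    by (auto intro!: bdd_belowI[where m = "- (\<Sum>j=1..n. \<bar>a j\<bar>)"])
qed

lemma le_min_C_on_zeros:
  assumes "\<And>t. Spoly n a t = 0 \<Longrightarrow> y \<le> Cpoly n a t"
  shows "y \<le> min_C_on_zeros n a"
  unfolding min_C_on_zeros_def
proof (rule cInf_greatest)
  have "Spoly n a 0 = 0" by (simp add: Spoly_def)
  then show "{Cpoly n a t |t. Spoly n a t = 0} \<noteq> {}" by blast
qed (use assms in blast)

lemma exists_coeffs_min_C_on_zeros_ge:
  assumes "n \<ge> 1" "0 < e"
  shows "\<exists>a. (\<Sum>j=1..n. a j) = 1 \<and> - (tan (pi / (2 * (real n + 1))))\<^sup>2 - e \<le> min_C_on_zeros n a"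
proof -
  define c where "c = (tan (pi / (2 * (real n + 1))))\<^sup>2"
  define B where "B = (\<Sum>j=1..n. fejer_coeff n j)"
  define d where "d = min e (1 / 2)"
  define a where "a j = (1 - d) / B * fejer_coeff n j + (if j = 1 then d else 0)" for j
  have "0 < d" "d < 1" "d \<le> e" using assms(2) by (auto simp: d_def)
  have "0 < B" using sum_fejer_coeff_pos[OF assms(1)] by (simp add: B_def)
  have C_a: "Cpoly n a t = (1 - d) / B * Cpoly n (fejer_coeff n) t + d * cos t" for t
    unfolding a_def by (rule Cpoly_affine_delta[OF assms(1)])
  have "(\<Sum>j=1..n. a j) = Cpoly n a 0" by (simp add: Cpoly_def)
  also have "\<dots> = 1"
  proof -
    have "Cpoly n (fejer_coeff n) 0 = B" by (simp add: Cpoly_def B_def)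
    then show ?thesis using \<open>0 < B\<close> by (simp add: C_a)
  qed
  finally have sum_a: "(\<Sum>j=1..n. a j) = 1" .
  have "- c - e \<le> Cpoly n a t" if "Spoly n a t = 0" for t
  proof -
    have "sin t * Spoly n a t = (1 - d) / B * (sin t * Spoly n (fejer_coeff n) t) + d * (sin t)\<^sup>2"
      unfolding a_def Spoly_affine_delta[OF assms(1)] by (simp add: algebra_simps power2_eq_square)
    moreover have "0 \<le> (1 - d) / B * (sin t * Spoly n (fejer_coeff n) t)"
      using \<open>d < 1\<close> \<open>0 < B\<close> sin_mult_Spoly_fejer_coeff_nonneg[of t n] by simp
    ultimately have "d * (sin t)\<^sup>2 \<le> 0" using that by simp
    then have "sin t = 0" using \<open>0 < d\<close> by (simp add: mult_le_0_iff)
    then have "cos t = cos 0 \<or> cos t = cos pi"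
      using sin_cos_squared_add[of t] by (simp add: power2_eq_1_iff)
    then have "Cpoly n a t = Cpoly n a 0 \<or> Cpoly n a t = Cpoly n a pi"
      using Cpoly_eq_if_cos_eq by blast
    moreover have "Cpoly n a 0 = 1" using sum_a by (simp add: Cpoly_def)
    moreover have "Cpoly n a pi = d * c - c - d"
    proof -
      have "Cpoly n (fejer_coeff n) pi = - c * B"
        by (simp add: Cpoly_fejer_coeff_pi[OF assms(1)] B_def c_def)
      then show ?thesis using \<open>0 < B\<close> by (simp add: C_a field_simps)
    qed
    moreover have "0 \<le> c" "0 \<le> d * c" using \<open>0 < d\<close> by (simp_all add: c_def)
    ultimately show ?thesis using \<open>d \<le> e\<close> \<open>0 < e\<close> by auto
  qed
  then show ?thesis using sum_a le_min_C_on_zeros unfolding c_def by blast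
qed

theorem theorem1:
  fixes n :: nat
  assumes "n \<ge> 1"
  shows "Sup {min_C_on_zeros n a | a. (\<Sum>j=1..n. a j) = 1}
           = - (tan (pi / (2 * (real n + 1))))\<^sup>2"
proof (rule cSup_eq_non_empty)
  have "(\<Sum>j=1..n. if j = 1 then 1 else 0 :: real) = 1" using assms by (simp add: sum.delta)
  then show "{min_C_on_zeros n a | a. (\<Sum>j=1..n. a j) = 1} \<noteq> {}" by blast
next
  fix x assume "x \<in> {min_C_on_zeros n a | a. (\<Sum>j=1..n. a j) = 1}"
  then obtain a where "(\<Sum>j=1..n. a j) = 1" "x = min_C_on_zeros n a" by blast
  then show "x \<le> - (tan (pi / (2 * (real n + 1))))\<^sup>2"
    using exists_S_zero_C_le[OF assms] min_C_on_zeros_le by (metis order.trans)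
next
  fix y assume upper: "\<And>x. x \<in> {min_C_on_zeros n a | a. (\<Sum>j=1..n. a j) = 1} \<Longrightarrow> x \<le> y"
  show "- (tan (pi / (2 * (real n + 1))))\<^sup>2 \<le> y"
  proof (rule field_le_epsilon)
    fix e :: real assume "0 < e"
    then obtain a where "(\<Sum>j=1..n. a j) = 1" "- (tan (pi / (2 * (real n + 1))))\<^sup>2 - e \<le> min_C_on_zeros n a"
      using exists_coeffs_min_C_on_zeros_ge[OF assms] by blast
    then show "- (tan (pi / (2 * (real n + 1))))\<^sup>2 \<le> y + e" using upper by fastforce
  qed
qed

end
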